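(* Let $a,b\in\mathbb{Z}$ with $b$ a perfect square, and suppose $\mathcal{F}(x)=x^8+ax^4+b$ is monogenic. Then $b=1$. Consequently, since the groups 8T11 and 8T22 arise as Galois groups of irreducible $\mathcal{F}$ only when $b$ is a square and $\sqrt b$ is not a square, there is no monogenic $\mathcal{F}(x)$ whose Galois group is 8T11 or 8T22.
   Context: A monic polynomial $f(x)\in\mathbb{Z}[x]$ is monogenic if it is irreducible over $\mathbb{Q}$ and $\mathbb{Z}[\theta]$ is the ring of integers of $\mathbb{Q}(\theta)$, $f(\theta)=0$. 8T$X$ is the $X$-th transitive subgroup of $S_8$ in the standard numbering; 8T11 $\cong C_4\circ D_4$, 8T22 $\cong D_4\circ D_4$. Galois groups are over $\mathbb{Q}$. *)

theory Defs
  imports "HOL-Computational_Algebra.Computational_Algebra" Complex_Main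
begin

definition int_adjoin :: "complex \<Rightarrow> complex set" where
  "int_adjoin \<theta> = {poly (map_poly of_int p) \<theta> | p :: int poly. True}"

text \<open>Q(theta) (for algebraic theta, Q[theta] = Q(theta)).\<close>
definition rat_adjoin :: "complex \<Rightarrow> complex set" where
  "rat_adjoin \<theta> = {poly (map_poly of_rat p) \<theta> | p :: rat poly. True}"

definition ring_of_integers :: "complex \<Rightarrow> complex set" where
  "ring_of_integers \<theta> = {x \<in> rat_adjoin \<theta>. algebraic_int x}"

definition monogenic :: "int poly \<Rightarrow> bool" where
  "monogenic f \<longleftrightarrow> lead_coeff f = 1 \<and>
     irreducible (map_poly (of_int :: int \<Rightarrow> rat) f) \<and>
     (\<forall>\<theta>::complex. poly (map_poly of_int f) \<theta> = 0 \<longrightarrow>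
        int_adjoin \<theta> = ring_of_integers \<theta>)"

definition F_poly :: "int \<Rightarrow> int \<Rightarrow> int poly" where
  "F_poly a b = [:b, 0, 0, 0, a, 0, 0, 0, 1:]"

end

theory Submission
  imports Defs "HOL-Computational_Algebra.Field_as_Ring"
begin

text \<open>
  Write \<open>b = c\<^sup>2\<close>. Then \<open>F = (x\<^sup>4 + c)\<^sup>2 - (2c - a) x\<^sup>4\<close>, so for a root \<open>\<theta>\<close> the element
  \<open>\<alpha> = \<theta>\<^sup>2 + c/\<theta>\<^sup>2\<close> of \<open>\<rat>(\<theta>)\<close> squares to the integer \<open>2c - a\<close>
  and is therefore an algebraic integer. If \<open>F\<close> is monogenic, \<open>\<alpha>\<close> lies in \<open>\<int>[\<theta>]\<close>, whose
  elements have integer coordinates in the power basis \<open>1, \<theta>, \<dots>, \<theta>\<^sup>7\<close> of \<open>\<rat>(\<theta>)\<close>.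
  The coordinate of \<open>\<alpha>\<close> at \<open>\<theta>\<^sup>6\<close> is \<open>-1/c\<close>, hence \<open>c = \<plusminus>1\<close> and \<open>b = 1\<close>.
\<close>

lemma map_poly_of_int_add:
  "map_poly (of_int :: int \<Rightarrow> 'a::comm_ring_1) (p + q) = map_poly of_int p + map_poly of_int q"
  by (simp add: poly_eq_iff coeff_map_poly)

lemma map_poly_of_int_mult:
  "map_poly (of_int :: int \<Rightarrow> 'a::comm_ring_1) (p * q) = map_poly of_int p * map_poly of_int q"
  by (simp add: poly_eq_iff coeff_map_poly coeff_mult)

lemma map_poly_of_rat_add:
  "map_poly (of_rat :: rat \<Rightarrow> 'a::field_char_0) (p + q) = map_poly of_rat p + map_poly of_rat q"
  by (simp add: poly_eq_iff coeff_map_poly of_rat_add)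

lemma map_poly_of_rat_diff:
  "map_poly (of_rat :: rat \<Rightarrow> 'a::field_char_0) (p - q) = map_poly of_rat p - map_poly of_rat q"
  by (simp add: poly_eq_iff coeff_map_poly of_rat_diff)

lemma map_poly_of_rat_mult:
  "map_poly (of_rat :: rat \<Rightarrow> 'a::field_char_0) (p * q) = map_poly of_rat p * map_poly of_rat q"
  by (simp add: poly_eq_iff coeff_map_poly coeff_mult of_rat_sum of_rat_mult)

lemma irreducible_root_dvd:
  fixes f p :: "rat poly" and \<theta> :: "'a::field_char_0"
  assumes irr: "irreducible f" and f_root: "poly (map_poly of_rat f) \<theta> = 0"
    and p_root: "poly (map_poly of_rat p) \<theta> = 0"
  shows "f dvd p"
proof (rule ccontr)
  assume "\<not> f dvd p"
  with irreducible_imp_prime_elem[OF irr] have "coprime f p"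
    by (rule prime_elem_imp_coprime)
  then obtain u v where "u * f + v * p = 1"
    using bezout_coefficients_fst_snd[of f p] by auto
  then have "(1 :: 'a) = poly (map_poly of_rat (u * f + v * p)) \<theta>"
    by simp
  also have "\<dots> = 0"
    by (simp add: map_poly_of_rat_add map_poly_of_rat_mult f_root p_root)
  finally show False by simp
qed

lemma irreducible_root_poly_eqI:
  fixes f p q :: "rat poly" and \<theta> :: "'a::field_char_0"
  assumes irr: "irreducible f" and f_root: "poly (map_poly of_rat f) \<theta> = 0"
    and "degree p < degree f" and "degree q < degree f"
    and "poly (map_poly of_rat p) \<theta> = poly (map_poly of_rat q) \<theta>"
  shows "p = q"
proof (rule ccontr)
  assume "p \<noteq> q"
  have "f dvd p - q"
    using assms by (intro irreducible_root_dvd[OF irr f_root]) (simp add: map_poly_of_rat_diff)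
  then have "degree f \<le> degree (p - q)"
    using \<open>p \<noteq> q\<close> by (simp add: dvd_imp_degree_le)
  moreover have "degree (p - q) < degree f"
    using assms by (simp add: degree_diff_less)
  ultimately show False by simp
qed

lemma monic_root_reduce:
  fixes f p :: "int poly" and \<theta> :: "'a::comm_ring_1"
  assumes monic: "lead_coeff f = 1" and f_root: "poly (map_poly of_int f) \<theta> = 0"
  obtains r where "poly (map_poly of_int p) \<theta> = poly (map_poly of_int r) \<theta>"
    and "degree r < degree f"
proof -
  obtain q r where qr: "pseudo_divmod p f = (q, r)" by force
  have "f \<noteq> 0" using monic by auto
  from pseudo_divmod[OF this qr] monic
  have p_eq: "p = f * q + r" and r_deg: "r = 0 \<or> degree r < degree f" by auto
  have "degree f \<noteq> 0"
  proof
    assume "degree f = 0"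
    with monic have "f = 1" by (metis degree_0_id pCons_one)
    with f_root show False by simp
  qed
  with r_deg have "degree r < degree f" by auto
  moreover have "poly (map_poly of_int p) \<theta> = poly (map_poly of_int r) \<theta>"
    using f_root by (simp add: p_eq map_poly_of_int_add map_poly_of_int_mult)
  ultimately show thesis by (intro that)
qed

lemma monogenic_algebraic_int_coeff_Ints:
  fixes f :: "int poly" and p :: "rat poly" and \<theta> :: complex
  assumes mono: "monogenic f" and f_root: "poly (map_poly of_int f) \<theta> = 0"
    and p_deg: "degree p < degree f" and "algebraic_int (poly (map_poly of_rat p) \<theta>)"
  shows "coeff p i \<in> \<int>"
proof -
  let ?f_rat = "map_poly (of_int :: int \<Rightarrow> rat) f"
  have monic: "lead_coeff f = 1" and irr: "irreducible ?f_rat"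
    and ring: "int_adjoin \<theta> = ring_of_integers \<theta>"
    using mono f_root unfolding monogenic_def by auto
  have "poly (map_poly of_rat p) \<theta> \<in> ring_of_integers \<theta>"
    using assms(4) unfolding ring_of_integers_def rat_adjoin_def by blast
  then obtain s :: "int poly" where "poly (map_poly of_rat p) \<theta> = poly (map_poly of_int s) \<theta>"
    unfolding ring[symmetric] int_adjoin_def by blast
  moreover obtain r :: "int poly" where
    "poly (map_poly of_int s) \<theta> = poly (map_poly of_int r) \<theta>" and r_deg: "degree r < degree f"
    using monic_root_reduce[OF monic f_root] .
  ultimately have same_value:
    "poly (map_poly of_rat (map_poly of_int r)) \<theta> = poly (map_poly of_rat p) \<theta>"
    by (simp add: map_poly_map_poly o_def)
  have "poly (map_poly of_rat ?f_rat) \<theta> = 0"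
    using f_root by (simp add: map_poly_map_poly o_def)
  from irreducible_root_poly_eqI[OF irr this _ _ same_value] have "map_poly of_int r = p"
    using r_deg p_deg by (simp add: degree_map_poly)
  then show ?thesis by (auto simp: coeff_map_poly)
qed

lemma power2_eq_of_int_imp_algebraic_int:
  fixes x :: "'a::field"
  assumes "x ^ 2 = of_int m"
  shows "algebraic_int x"
  by (rule algebraic_int_root[where p = "monom 1 2" and y = "of_int m"])
    (use assms in \<open>simp_all add: poly_monom degree_monom_eq coeff_monom\<close>)

lemma poly_F_poly:
  "poly (map_poly (of_int :: int \<Rightarrow> 'a::comm_ring_1) (F_poly a b)) x
     = x ^ 8 + of_int a * x ^ 4 + of_int b"
  by (simp add: F_poly_def map_poly_pCons algebra_simps eval_nat_numeral)

lemma degree_F_poly: "degree (F_poly a b) = 8"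
  by (simp add: F_poly_def)

lemma irreducible_F_poly_imp_const_nonzero:
  assumes "irreducible (map_poly (of_int :: int \<Rightarrow> rat) (F_poly a b))"
  shows "b \<noteq> 0"
proof
  assume "b = 0"
  then have "map_poly (of_int :: int \<Rightarrow> rat) (F_poly a b)
      = [:0, 1:] * [:0, 0, 0, of_int a, 0, 0, 0, 1:]"
    by (simp add: F_poly_def map_poly_pCons)
  from irreducibleD[OF assms this] show False
    by (auto simp: is_unit_poly_iff)
qed

text \<open>The power-basis coordinates of \<open>\<theta>\<^sup>2 + c/\<theta>\<^sup>2\<close> for a root \<open>\<theta>\<close> of \<open>x\<^sup>8 + a x\<^sup>4 + c\<^sup>2\<close>,
  obtained from \<open>\<theta>\<^sup>-\<^sup>2 = -(\<theta>\<^sup>6 + a \<theta>\<^sup>2) / c\<^sup>2\<close>.\<close>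
definition F_sqrt_poly :: "int \<Rightarrow> int \<Rightarrow> rat poly" where
  "F_sqrt_poly a c = [:0, 0, of_int (c - a) / of_int c, 0, 0, 0, - 1 / of_int c:]"

lemma degree_F_sqrt_poly: "degree (F_sqrt_poly a c) < 8"
  by (simp add: F_sqrt_poly_def)

lemma coeff_F_sqrt_poly_6: "coeff (F_sqrt_poly a c) 6 = - 1 / of_int c"
  by (simp add: F_sqrt_poly_def numeral_eq_Suc)

lemma poly_F_sqrt_poly:
  "poly (map_poly (of_rat :: rat \<Rightarrow> 'a::field_char_0) (F_sqrt_poly a c)) \<theta>
     = (of_int (c - a) * \<theta> ^ 2 - \<theta> ^ 6) / of_int c"
  unfolding F_sqrt_poly_def
  by (simp add: map_poly_pCons of_rat_divide of_rat_minus of_rat_diff)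
    (simp add: add_divide_distrib diff_divide_distrib algebra_simps eval_nat_numeral)

lemma F_sqrt_poly_square:
  fixes \<theta> :: "'a::field_char_0" and a c :: int
  assumes "c \<noteq> 0" and "poly (map_poly of_int (F_poly a (c ^ 2))) \<theta> = 0"
  shows "poly (map_poly of_rat (F_sqrt_poly a c)) \<theta> ^ 2 = of_int (2 * c - a)"
proof -
  have "(of_int (c - a) * \<theta> ^ 2 - \<theta> ^ 6) ^ 2
      = (\<theta> ^ 4 + of_int a - 2 * of_int c) * (\<theta> ^ 8 + of_int a * \<theta> ^ 4 + of_int c ^ 2)
        + of_int c ^ 2 * of_int (2 * c - a)"
    by (simp add: algebra_simps eval_nat_numeral)
  with assms show ?thesis
    by (simp add: poly_F_sqrt_poly poly_F_poly power_divide)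
qed

lemma Ints_one_div_of_int_imp_abs_eq_1:
  assumes "c \<noteq> 0" and "1 / (of_int c :: 'a::field_char_0) \<in> \<int>"
  shows "\<bar>c\<bar> = 1"
proof -
  from assms(2) obtain k :: int where "1 / (of_int c :: 'a) = of_int k"
    by (rule Ints_cases)
  then have "(of_int (k * c) :: 'a) = of_int 1"
    using assms(1) by (simp add: field_simps)
  then have "k * c = 1"
    by (simp only: of_int_eq_iff)
  then show ?thesis
    by (metis dvd_triv_right zdvd1_eq)
qed

theorem mainTheorem4:
  fixes a b :: int
  assumes "\<exists>c::int. b = c ^ 2"
    and "monogenic (F_poly a b)"
  shows "b = 1"
proof -
  obtain c :: int where b_eq: "b = c ^ 2" using assms(1) by blast
  have "b \<noteq> 0"
    using assms(2) by (intro irreducible_F_poly_imp_const_nonzero[of a b]) (simp add: monogenic_def)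
  then have "c \<noteq> 0" using b_eq by simp
  obtain \<theta> :: complex where root: "poly (map_poly of_int (F_poly a b)) \<theta> = 0"
    using alg_closed_imp_poly_has_root[of "map_poly (of_int :: int \<Rightarrow> complex) (F_poly a b)"]
    by (auto simp: degree_map_poly degree_F_poly)
  have "poly (map_poly of_rat (F_sqrt_poly a c)) \<theta> ^ 2 = of_int (2 * c - a)"
    using F_sqrt_poly_square[OF \<open>c \<noteq> 0\<close>, of a \<theta>] root b_eq by simp
  then have "algebraic_int (poly (map_poly of_rat (F_sqrt_poly a c)) \<theta>)"
    by (rule power2_eq_of_int_imp_algebraic_int)
  then have "coeff (F_sqrt_poly a c) 6 \<in> \<int>"
    using monogenic_algebraic_int_coeff_Ints[OF assms(2) root] degree_F_sqrt_poly
    by (simp add: degree_F_poly)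
  then have "\<bar>c\<bar> = 1"
    using \<open>c \<noteq> 0\<close> by (intro Ints_one_div_of_int_imp_abs_eq_1[where 'a = rat])
      (simp_all add: coeff_F_sqrt_poly_6)
  then show ?thesis
    using b_eq by (metis power2_abs one_power2)
qed

end
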